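(* Consider the class-incremental setting described in the context, where the TII predictor is induced by OOD detectors $P_1,\dots,P_t$. Let $\delta,\eta\ge0$ and $\epsilon_1,\dots,\epsilon_t\ge0$. If $H_{\rm WTP}(\boldsymbol{x})\le\delta$, $H_{\rm TAP}(\boldsymbol{x})\le\eta$, and $H_{{\rm OOD},i}(\boldsymbol{x})\le\epsilon_i$ for all $i\in[t]$, for every input $\boldsymbol{x}$, then the loss error satisfies $$\mathcal L\in\Big[0,\ \max\Big\{\delta+\mathbb{E}_{\boldsymbol{x}\sim\mu}\Big[\Big(\sum_{i}\mathbf 1_{\boldsymbol{x}\in\mathcal X_i}e^{\epsilon_i}\Big)\Big(\sum_i\mathbf 1_{\boldsymbol{x}\notin\mathcal X_i}(1-e^{-\epsilon_i})\Big)\Big],\ \eta\Big\}\Big],$$ where $\boldsymbol{x}\in\mathcal X_i$ means $i=\bar i(\boldsymbol{x})$, so the integrand equals $e^{\epsilon_{\bar i(\boldsymbol{x})}}\sum_{j\ne\bar i(\boldsymbol{x})}(1-e^{-\epsilon_j})$.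
   Context: Class-incremental setting (CIL). Fix $t\ge1$ tasks; task $i$ has within-task class indices $[n_i]$; $C=\{(i,j):i\in[t],j\in[n_i]\}$ is the set of all classes (distinct across tasks). Let $\mu$ be a probability distribution on inputs; each $\boldsymbol{x}$ has ground-truth task $\bar i(\boldsymbol{x})$, within-task index $\bar j(\boldsymbol{x})$ and label $y(\boldsymbol{x})=(\bar i,\bar j)$; write $\boldsymbol{x}\in\mathcal X_i$ iff $\bar i(\boldsymbol{x})=i$. An OOD detector for task $i$ assigns to $\boldsymbol{x}$ a number $P_i(\boldsymbol{x})\in[0,1]$, with cross-entropy $H_{{\rm OOD},i}(\boldsymbol{x})=-\log P_i(\boldsymbol{x})$ if $\boldsymbol{x}\in\mathcal X_i$ and $-\log(1-P_i(\boldsymbol{x}))$ otherwise. The induced TII probability is $P(\boldsymbol{x}\in\mathcal X_i\mid\mathcal D,\theta)=P_i(\boldsymbol{x})/\sum_jP_j(\boldsymbol{x})$. WTP predictors give, for each $i$, distributions $\big(P(\boldsymbol{x}\in\mathcal X_{i,j}\mid\boldsymbol{x}\in\mathcal X_i,\mathcal D,\theta)\big)_{j\in[n_i]}$; the joint prediction is $P(\boldsymbol{x}\in\mathcal X_{i,j}\mid\mathcal D,\theta)=P(\boldsymbol{x}\in\mathcal X_i\mid\mathcal D,\theta)P(\boldsymbol{x}\in\mathcal X_{i,j}\mid\boldsymbol{x}\in\mathcal X_i,\mathcal D,\theta)$; a TAP predictor gives a separate distribution $\big(P(\boldsymbol{x}\in\mathcal X^c\mid\mathcal D,\theta)\big)_{c\in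 C}$. All are measurable in $\boldsymbol{x}$. With $-\log0=+\infty$: $H_{\rm WTP}(\boldsymbol{x})=-\log P(\boldsymbol{x}\in\mathcal X_{\bar i,\bar j}\mid\boldsymbol{x}\in\mathcal X_{\bar i},\mathcal D,\theta)$, $H_{\rm TAP}(\boldsymbol{x})=-\log P(\boldsymbol{x}\in\mathcal X^{y(\boldsymbol{x})}\mid\mathcal D,\theta)$. The loss error is $\mathcal L=\max\{\mathbb{E}_{\boldsymbol{x}\sim\mu}[-\log P(\boldsymbol{x}\in\mathcal X_{\bar i,\bar j}\mid\mathcal D,\theta)],\ \mathbb{E}_{\boldsymbol{x}\sim\mu}[H_{\rm TAP}(\boldsymbol{x})]\}$. *)

theory Defs
  imports "HOL-Probability.Probability"
begin

text \<open>Tasks are indexed by i < t (i.e. [t] is rendered as {..<t}); within-task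
classes of task i by j < n i. The cross-entropy -log p is valued in ennreal
with -log 0 = infinity.\<close>

definition neglog :: "real \<Rightarrow> ennreal" where
  "neglog p = (if p \<le> 0 then \<infinity> else ennreal (- ln p))"

definition classes :: "nat \<Rightarrow> (nat \<Rightarrow> nat) \<Rightarrow> (nat \<times> nat) set" where
  "classes t n = Sigma {..<t} (\<lambda>i. {..<n i})"

definition TII :: "nat \<Rightarrow> (nat \<Rightarrow> 'x \<Rightarrow> real) \<Rightarrow> 'x \<Rightarrow> nat \<Rightarrow> real" where
  "TII t P x i = P i x / (\<Sum>j<t. P j x)"

definition H_OOD :: "(nat \<Rightarrow> 'x \<Rightarrow> real) \<Rightarrow> ('x \<Rightarrow> nat) \<Rightarrow> nat \<Rightarrow> 'x \<Rightarrow> ennreal" where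
  "H_OOD P ibar i x = (if ibar x = i then neglog (P i x) else neglog (1 - P i x))"

text \<open>W i x j = P(x in X_{i,j} | x in X_i).\<close>
definition H_WTP :: "(nat \<Rightarrow> 'x \<Rightarrow> nat \<Rightarrow> real) \<Rightarrow> ('x \<Rightarrow> nat) \<Rightarrow> ('x \<Rightarrow> nat) \<Rightarrow> 'x \<Rightarrow> ennreal" where
  "H_WTP W ibar jbar x = neglog (W (ibar x) x (jbar x))"

text \<open>Q x c = P(x in X^c), TAP prediction.\<close>
definition H_TAP :: "('x \<Rightarrow> nat \<times> nat \<Rightarrow> real) \<Rightarrow> ('x \<Rightarrow> nat) \<Rightarrow> ('x \<Rightarrow> nat) \<Rightarrow> 'x \<Rightarrow> ennreal" where
  "H_TAP Q ibar jbar x = neglog (Q x (ibar x, jbar x))"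

definition joint_pred :: "nat \<Rightarrow> (nat \<Rightarrow> 'x \<Rightarrow> real) \<Rightarrow> (nat \<Rightarrow> 'x \<Rightarrow> nat \<Rightarrow> real) \<Rightarrow> 'x \<Rightarrow> nat \<Rightarrow> nat \<Rightarrow> real" where
  "joint_pred t P W x i j = TII t P x i * W i x j"

definition loss_error ::
  "'x measure \<Rightarrow> nat \<Rightarrow> (nat \<Rightarrow> 'x \<Rightarrow> real) \<Rightarrow> (nat \<Rightarrow> 'x \<Rightarrow> nat \<Rightarrow> real)
   \<Rightarrow> ('x \<Rightarrow> nat \<times> nat \<Rightarrow> real) \<Rightarrow> ('x \<Rightarrow> nat) \<Rightarrow> ('x \<Rightarrow> nat) \<Rightarrow> ennreal" where
  "loss_error \<mu> t P W Q ibar jbar =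
     max (\<integral>\<^sup>+ x. neglog (joint_pred t P W x (ibar x) (jbar x)) \<partial>\<mu>)
         (\<integral>\<^sup>+ x. H_TAP Q ibar jbar x \<partial>\<mu>)"

end

theory Submission
  imports Defs
begin

text \<open>For the true task i, the OOD bounds give P_i \<ge> exp(-\<epsilon>_i) and P_j \<le> 1 - exp(-\<epsilon>_j)
for j \<noteq> i. Writing R for the total score of the wrong tasks, the TII cross-entropy is
ln (1 + R / P_i) \<le> R / P_i \<le> exp \<epsilon>_i \<cdot> the sum over j \<noteq> i of 1 - exp(-\<epsilon>_j). Cross-entropy is additive
over the product TII \<times> WTP, which adds \<delta>; integrating against the probability
measure \<mu> gives the first term of the maximum, and the TAP part is bounded by \<eta>.\<close>

lemma neglog_le_ennreal_iff:
  assumes "e \<ge> 0"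
  shows "neglog p \<le> ennreal e \<longleftrightarrow> exp (- e) \<le> p"
proof
  assume "neglog p \<le> ennreal e"
  then have "p > 0" "- ln p \<le> e"
    using assms by (auto simp: neglog_def top_unique split: if_splits)
  then show "exp (- e) \<le> p"
    by (metis exp_le_cancel_iff exp_ln minus_le_iff)
next
  assume le: "exp (- e) \<le> p"
  then have "p > 0" by (meson exp_gt_zero less_le_trans)
  moreover have "- ln p \<le> e"
    using le \<open>p > 0\<close> by (metis ln_exp ln_le_cancel_iff exp_gt_zero minus_le_iff)
  ultimately show "neglog p \<le> ennreal e"
    by (simp add: neglog_def ennreal_leI)
qed

lemma neglog_mult_le:
  assumes "neglog p \<le> ennreal a" "neglog q \<le> ennreal b" "a \<ge> 0" "b \<ge> 0"
  shows "neglog (p * q) \<le> ennreal (a + b)"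
proof -
  have "exp (- a) \<le> p" "exp (- b) \<le> q"
    using assms by (simp_all add: neglog_le_ennreal_iff)
  then have "exp (- a) * exp (- b) \<le> p * q"
    by (meson exp_ge_zero mult_mono order_trans)
  then have "exp (- (a + b)) \<le> p * q"
    by (simp add: exp_add [symmetric])
  then show ?thesis
    using assms(3,4) neglog_le_ennreal_iff[of "a + b" "p * q"] by simp
qed

lemma minus_ln_div_add_le:
  fixes a r :: real
  assumes "a > 0" "r \<ge> 0"
  shows "- ln (a / (a + r)) \<le> r / a"
proof -
  have "- ln (a / (a + r)) = ln ((a + r) / a)"
    using assms by (simp add: ln_div)
  also have "\<dots> \<le> (a + r) / a - 1"
    using assms by (intro ln_le_minus_one) simp
  also have "\<dots> = r / a"
    using assms by (simp add: field_simps)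
  finally show ?thesis .
qed

lemma neglog_TII_le:
  assumes i: "ibar x < t"
    and P_nonneg: "\<And>j. j < t \<Longrightarrow> 0 \<le> P j x"
    and \<epsilon>_nonneg: "\<And>j. j < t \<Longrightarrow> 0 \<le> \<epsilon> j"
    and OOD: "\<And>j. j < t \<Longrightarrow> H_OOD P ibar j x \<le> ennreal (\<epsilon> j)"
  shows "neglog (TII t P x (ibar x)) \<le>
    ennreal (exp (\<epsilon> (ibar x)) * (\<Sum>j<t. if ibar x \<noteq> j then 1 - exp (- \<epsilon> j) else 0))"
    (is "_ \<le> ennreal (exp (\<epsilon> ?i) * ?B)")
proof -
  define R where "R = (\<Sum>j\<in>{..<t} - {?i}. P j x)"
  have P_true: "exp (- \<epsilon> ?i) \<le> P ?i x"
    using OOD[OF i] \<epsilon>_nonneg[OF i] by (simp add: H_OOD_def neglog_le_ennreal_iff)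
  have P_false: "P j x \<le> 1 - exp (- \<epsilon> j)" if "j \<in> {..<t} - {?i}" for j
    using that OOD[of j] \<epsilon>_nonneg[of j] by (auto simp: H_OOD_def neglog_le_ennreal_iff)
  have P_pos: "P ?i x > 0"
    using P_true by (meson exp_gt_zero less_le_trans)
  have R_nonneg: "R \<ge> 0"
    unfolding R_def using P_nonneg by (auto intro: sum_nonneg)
  have "R \<le> (\<Sum>j\<in>{..<t} - {?i}. 1 - exp (- \<epsilon> j))"
    unfolding R_def by (rule sum_mono) (rule P_false)
  also have "\<dots> = (\<Sum>j\<in>{..<t} - {?i}. if ?i \<noteq> j then 1 - exp (- \<epsilon> j) else 0)"
    by (rule sum.cong) auto
  also have "\<dots> = ?B"
    using i by (simp add: sum.remove[of "{..<t}" ?i])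
  finally have R_le: "R \<le> ?B" .
  have inv_P: "1 / P ?i x \<le> exp (\<epsilon> ?i)"
    using P_pos P_true by (simp add: divide_simps exp_minus mult.commute)
  have TII_eq: "TII t P x ?i = P ?i x / (P ?i x + R)"
    using i by (simp add: TII_def R_def sum.remove[of "{..<t}" ?i])
  have "- ln (TII t P x ?i) \<le> R / P ?i x"
    unfolding TII_eq by (rule minus_ln_div_add_le[OF P_pos R_nonneg])
  also have "\<dots> = R * (1 / P ?i x)"
    by simp
  also have "\<dots> \<le> ?B * exp (\<epsilon> ?i)"
    using R_le R_nonneg inv_P P_pos by (intro mult_mono) auto
  also have "\<dots> = exp (\<epsilon> ?i) * ?B"
    by (rule mult.commute)
  finally have "- ln (TII t P x ?i) \<le> exp (\<epsilon> ?i) * ?B" .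
  moreover have "TII t P x ?i > 0"
    unfolding TII_eq using P_pos R_nonneg by simp
  ultimately show ?thesis
    by (simp add: neglog_def ennreal_leI)
qed

lemma neglog_joint_pred_le:
  assumes i: "ibar x < t"
    and P_nonneg: "\<And>j. j < t \<Longrightarrow> 0 \<le> P j x"
    and \<epsilon>_nonneg: "\<And>j. j < t \<Longrightarrow> 0 \<le> \<epsilon> j"
    and OOD: "\<And>j. j < t \<Longrightarrow> H_OOD P ibar j x \<le> ennreal (\<epsilon> j)"
    and \<delta>_nonneg: "0 \<le> \<delta>"
    and WTP: "H_WTP W ibar jbar x \<le> ennreal \<delta>"
  shows "neglog (joint_pred t P W x (ibar x) (jbar x)) \<le>
    ennreal \<delta> + ennreal ((\<Sum>j<t. if ibar x = j then exp (\<epsilon> j) else 0) *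
                         (\<Sum>j<t. if ibar x \<noteq> j then 1 - exp (- \<epsilon> j) else 0))"
proof -
  let ?B = "exp (\<epsilon> (ibar x)) * (\<Sum>j<t. if ibar x \<noteq> j then 1 - exp (- \<epsilon> j) else 0)"
  have B_nonneg: "0 \<le> ?B"
    using \<epsilon>_nonneg by (auto intro!: mult_nonneg_nonneg sum_nonneg)
  have "neglog (TII t P x (ibar x) * W (ibar x) x (jbar x)) \<le> ennreal (?B + \<delta>)"
    using neglog_TII_le[OF i P_nonneg \<epsilon>_nonneg OOD] WTP B_nonneg \<delta>_nonneg
    by (intro neglog_mult_le) (auto simp: H_WTP_def)
  then show ?thesis
    using i B_nonneg \<delta>_nonneg by (simp add: joint_pred_def ennreal_plus add.commute)
qed

theorem theorem8:
  fixes \<mu> :: "'x measure" and t :: nat and n :: "nat \<Rightarrow> nat"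
    and ibar jbar :: "'x \<Rightarrow> nat"
    and P :: "nat \<Rightarrow> 'x \<Rightarrow> real"
    and W :: "nat \<Rightarrow> 'x \<Rightarrow> nat \<Rightarrow> real"
    and Q :: "'x \<Rightarrow> nat \<times> nat \<Rightarrow> real"
    and \<delta> \<eta> :: real and \<epsilon> :: "nat \<Rightarrow> real"
  assumes prob: "prob_space \<mu>"
    and t_pos: "t \<ge> 1"
    and labels: "\<And>x. x \<in> space \<mu> \<Longrightarrow> ibar x < t \<and> jbar x < n (ibar x)"
    and ibar_meas: "ibar \<in> measurable \<mu> (count_space UNIV)"
    and jbar_meas: "jbar \<in> measurable \<mu> (count_space UNIV)"
    and P_range: "\<And>i x. i < t \<Longrightarrow> x \<in> space \<mu> \<Longrightarrow> 0 \<le> P i x \<and> P i x \<le> 1"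
    and P_meas: "\<And>i. i < t \<Longrightarrow> P i \<in> borel_measurable \<mu>"
    and W_nonneg: "\<And>i x j. i < t \<Longrightarrow> x \<in> space \<mu> \<Longrightarrow> j < n i \<Longrightarrow> 0 \<le> W i x j"
    and W_sum: "\<And>i x. i < t \<Longrightarrow> x \<in> space \<mu> \<Longrightarrow> (\<Sum>j<n i. W i x j) = 1"
    and W_meas: "\<And>i j. i < t \<Longrightarrow> j < n i \<Longrightarrow> (\<lambda>x. W i x j) \<in> borel_measurable \<mu>"
    and Q_nonneg: "\<And>x c. x \<in> space \<mu> \<Longrightarrow> c \<in> classes t n \<Longrightarrow> 0 \<le> Q x c"
    and Q_sum: "\<And>x. x \<in> space \<mu> \<Longrightarrow> (\<Sum>c\<in>classes t n. Q x c) = 1"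
    and Q_meas: "\<And>c. c \<in> classes t n \<Longrightarrow> (\<lambda>x. Q x c) \<in> borel_measurable \<mu>"
    and \<delta>_nn: "\<delta> \<ge> 0" and \<eta>_nn: "\<eta> \<ge> 0"
    and \<epsilon>_nn: "\<And>i. i < t \<Longrightarrow> \<epsilon> i \<ge> 0"
    and WTP_bound: "\<And>x. x \<in> space \<mu> \<Longrightarrow> H_WTP W ibar jbar x \<le> ennreal \<delta>"
    and TAP_bound: "\<And>x. x \<in> space \<mu> \<Longrightarrow> H_TAP Q ibar jbar x \<le> ennreal \<eta>"
    and OOD_bound: "\<And>x i. x \<in> space \<mu> \<Longrightarrow> i < t \<Longrightarrow> H_OOD P ibar i x \<le> ennreal (\<epsilon> i)"
  shows "0 \<le> loss_error \<mu> t P W Q ibar jbar \<and>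
         loss_error \<mu> t P W Q ibar jbar \<le>
           max (ennreal \<delta> + (\<integral>\<^sup>+ x. ennreal
                  ((\<Sum>i<t. if ibar x = i then exp (\<epsilon> i) else 0) *
                   (\<Sum>i<t. if ibar x \<noteq> i then 1 - exp (- \<epsilon> i) else 0)) \<partial>\<mu>))
               (ennreal \<eta>)"
proof -
  interpret prob_space \<mu> by (rule prob)
  define f where "f x = (\<Sum>i<t. if ibar x = i then exp (\<epsilon> i) else 0) *
                          (\<Sum>i<t. if ibar x \<noteq> i then 1 - exp (- \<epsilon> i) else 0)" for x
  have "(\<integral>\<^sup>+ x. neglog (joint_pred t P W x (ibar x) (jbar x)) \<partial>\<mu>) \<le>
      (\<integral>\<^sup>+ x. ennreal \<delta> + ennreal (f x) \<partial>\<mu>)"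
    unfolding f_def using labels P_range \<epsilon>_nn OOD_bound \<delta>_nn WTP_bound
    by (intro nn_integral_mono neglog_joint_pred_le) auto
  also have "\<dots> = ennreal \<delta> + (\<integral>\<^sup>+ x. ennreal (f x) \<partial>\<mu>)"
    using ibar_meas by (subst nn_integral_add) (auto simp: f_def emeasure_space_1)
  finally have joint: "(\<integral>\<^sup>+ x. neglog (joint_pred t P W x (ibar x) (jbar x)) \<partial>\<mu>) \<le>
      ennreal \<delta> + (\<integral>\<^sup>+ x. ennreal (f x) \<partial>\<mu>)" .
  have "(\<integral>\<^sup>+ x. H_TAP Q ibar jbar x \<partial>\<mu>) \<le> (\<integral>\<^sup>+ x. ennreal \<eta> \<partial>\<mu>)"
    using TAP_bound by (rule nn_integral_mono)
  then have TAP: "(\<integral>\<^sup>+ x. H_TAP Q ibar jbar x \<partial>\<mu>) \<le> ennreal \<eta>"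
    by (simp add: emeasure_space_1)
  show ?thesis
    using max.mono[OF joint TAP] by (simp add: loss_error_def f_def)
qed

end
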